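(* Let $n\ge 4$ and $1\le k<\frac{n}{2}$ be integers, let $P_1=\{v\subset[n]:|v|=k\}$ and $P_2=\{w\subset [n]:|w|=k+1\}$, and let $f$ be an automorphism of $B(n,k)$. If $n\ne 2k+1$, then $f(P_1)=P_1$ and $f(P_2)=P_2$. If $n=2k+1$, then either $f(P_1)=P_1$ and $f(P_2)=P_2$, or $f(P_1)=P_2$ and $f(P_2)=P_1$.
   Context: For integers $n\ge 4$ and $1\le k<\frac n2$, let $[n]=\{1,\dots,n\}$. The graph $B(n,k)$ has vertex set $V=\{v\subset[n] : |v|\in\{k,k+1\}\}$, and two vertices $v,w$ are adjacent iff $v\subset w$ or $w\subset v$. *)

theory Defs
  imports Main
begin

definition B_vertices :: "nat \<Rightarrow> nat \<Rightarrow> nat set set" where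
  "B_vertices n k = {v. v \<subseteq> {1..n} \<and> (card v = k \<or> card v = k + 1)}"

definition B_adj :: "nat set \<Rightarrow> nat set \<Rightarrow> bool" where
  "B_adj v w \<longleftrightarrow> v \<subset> w \<or> w \<subset> v"

definition B_automorphism :: "nat \<Rightarrow> nat \<Rightarrow> (nat set \<Rightarrow> nat set) \<Rightarrow> bool" where
  "B_automorphism n k f \<longleftrightarrow>
     bij_betw f (B_vertices n k) (B_vertices n k) \<and>
     (\<forall>v\<in>B_vertices n k. \<forall>w\<in>B_vertices n k. B_adj (f v) (f w) \<longleftrightarrow> B_adj v w)"

definition layer :: "nat \<Rightarrow> nat \<Rightarrow> nat set set" where
  "layer n m = {v. v \<subseteq> {1..n} \<and> card v = m}"

end

theory Submission
  imports Defs Complex_Main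
begin

text \<open>
  Call a vertex preserved by f if f does not change its cardinality. The two ends of an edge have
  different cardinalities, and so do their images, so an edge joins either two preserved or two
  non-preserved vertices. The graph is connected (two k-sets are linked by exchanging one element
  at a time), hence either every vertex is preserved and f fixes both layers, or none is and f
  swaps them. A swap is a bijection between the layers, so C(n,k) = C(n,k+1), which for 2k < n
  forces n = 2k + 1.
\<close>

lemma B_vertices_eq_layers: "B_vertices n k = layer n k \<union> layer n (Suc k)"
  unfolding B_vertices_def layer_def by auto

lemma layers_disjoint: "layer n k \<inter> layer n (Suc k) = {}"
  unfolding layer_def by auto

lemma finite_B_vertex: "v \<in> B_vertices n k \<Longrightarrow> finite v"
  unfolding B_vertices_def by (auto intro: finite_subset)

lemma card_layer: "card (layer n m) = n choose m"
  using n_subsets[of "{1..n}" m] unfolding layer_def by simp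

lemma B_invariant_on_layer:
  assumes inv: "\<And>v w. v \<in> B_vertices n k \<Longrightarrow> w \<in> B_vertices n k \<Longrightarrow> v \<subset> w \<Longrightarrow> Q v = Q w"
    and "A \<in> layer n k" and "B \<in> layer n k"
  shows "Q A = Q B"
  using assms(2,3)
proof (induction "card (A - B)" arbitrary: A)
  case 0
  have "finite A" "finite B" and "card A = card B"
    using 0 unfolding layer_def by (auto intro: finite_subset)
  moreover from this have "A \<subseteq> B" using "0.hyps" by auto
  ultimately show ?case using card_subset_eq by metis
next
  case (Suc m)
  have fin: "finite A" "finite B" and card: "card A = k" "card B = k"
    and sub: "A \<subseteq> {1..n}" "B \<subseteq> {1..n}"
    using Suc.prems unfolding layer_def by (auto intro: finite_subset)
  obtain a where a: "a \<in> A" "a \<notin> B"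
    using Suc.hyps(2) by (metis Diff_iff card.empty ex_in_conv nat.distinct(1))
  have "card (B - A) = card (A - B)"
    using card_Diff_subset_Int[of A B] card_Diff_subset_Int[of B A] fin card
    by (simp add: Int_commute)
  then obtain b where b: "b \<in> B" "b \<notin> A"
    using Suc.hyps(2) by (metis Diff_iff card.empty ex_in_conv nat.distinct(1))
  define A' where "A' = insert b (A - {a})"
  \<comment> \<open>A and A' are both contained in the vertex insert b A of the next layer.\<close>
  have A': "A' \<in> layer n k"
    using fin a b card sub card_gt_0_iff[of A] unfolding A'_def layer_def
    by (auto simp: card_Diff_singleton)
  have up: "insert b A \<in> B_vertices n k"
    using fin b card sub unfolding B_vertices_def by auto
  have "Q A = Q (insert b A)"
    using inv[OF _ up] Suc.prems(1) b by (auto simp: B_vertices_eq_layers)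
  also have "\<dots> = Q A'"
  proof -
    have "A' \<subset> insert b A" using a b unfolding A'_def by auto
    then show ?thesis using inv[OF _ up, of A'] A' by (simp add: B_vertices_eq_layers)
  qed
  also have "\<dots> = Q B"
  proof (rule Suc.hyps(1)[OF _ A' Suc.prems(2)])
    have "A' - B = (A - B) - {a}" unfolding A'_def using b by auto
    then show "m = card (A' - B)" using Suc.hyps(2) a fin by simp
  qed
  finally show ?case .
qed

lemma B_invariant_constant:
  assumes inv: "\<And>v w. v \<in> B_vertices n k \<Longrightarrow> w \<in> B_vertices n k \<Longrightarrow> v \<subset> w \<Longrightarrow> Q v = Q w"
    and "A \<in> B_vertices n k" and "B \<in> B_vertices n k"
  shows "Q A = Q B"
proof -
  have down: "\<exists>A'\<in>layer n k. Q A' = Q A" if "A \<in> B_vertices n k" for A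
  proof (cases "A \<in> layer n k")
    case False
    with that have A: "A \<in> layer n (Suc k)" by (simp add: B_vertices_eq_layers)
    then obtain x where "x \<in> A" unfolding layer_def by fastforce
    with A have "A - {x} \<in> layer n k"
      unfolding layer_def by (auto intro: finite_subset)
    moreover from this have "Q (A - {x}) = Q A"
      using inv \<open>x \<in> A\<close> that by (auto simp: B_vertices_eq_layers)
    ultimately show ?thesis by blast
  qed auto
  obtain A' B' where "A' \<in> layer n k" "Q A' = Q A" "B' \<in> layer n k" "Q B' = Q B"
    using down[OF assms(2)] down[OF assms(3)] by blast
  then show ?thesis
    using B_invariant_on_layer[of n k Q, OF inv] by metis
qed

lemma B_automorphism_card_preserving_invariant:
  assumes f: "B_automorphism n k f"
    and v: "v \<in> B_vertices n k" and w: "w \<in> B_vertices n k" and "v \<subset> w"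
  shows "(card (f v) = card v) = (card (f w) = card w)"
proof -
  have bij: "bij_betw f (B_vertices n k) (B_vertices n k)"
    and adj: "B_adj (f v) (f w) = B_adj v w"
    using f v w unfolding B_automorphism_def by simp_all
  have fv: "f v \<in> B_vertices n k" and fw: "f w \<in> B_vertices n k"
    using bij_betw_apply[OF bij] v w by simp_all
  from adj \<open>v \<subset> w\<close> have "f v \<subset> f w \<or> f w \<subset> f v"
    unfolding B_adj_def by simp
  then have "card (f v) < card (f w) \<or> card (f w) < card (f v)"
    using psubset_card_mono finite_B_vertex[OF fv] finite_B_vertex[OF fw] by blast
  moreover have "card v < card w"
    using psubset_card_mono finite_B_vertex[OF w] \<open>v \<subset> w\<close> by blast
  moreover have "card u = k \<or> card u = Suc k" if "u \<in> B_vertices n k" for u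
    using that unfolding B_vertices_def by simp
  note this[OF v] this[OF w] this[OF fv] this[OF fw]
  ultimately show ?thesis by linarith
qed

lemma bij_betw_disjoint_Un_image_eq:
  assumes "bij_betw f (A \<union> B) (C \<union> D)" and "C \<inter> D = {}"
    and "f ` A \<subseteq> C" and "f ` B \<subseteq> D"
  shows "f ` A = C \<and> f ` B = D"
proof -
  have "f ` A \<union> f ` B = C \<union> D"
    using assms(1) by (simp add: bij_betw_def image_Un)
  then show ?thesis
    using assms(2-4) by blast
qed

lemma B_automorphism_preserves_or_swaps_layers:
  assumes f: "B_automorphism n k f"
  shows "(f ` layer n k = layer n k \<and> f ` layer n (Suc k) = layer n (Suc k)) \<or>
         (f ` layer n k = layer n (Suc k) \<and> f ` layer n (Suc k) = layer n k)"
proof -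
  let ?V = "B_vertices n k" and ?L1 = "layer n k" and ?L2 = "layer n (Suc k)"
  have bij: "bij_betw f (?L1 \<union> ?L2) (?L1 \<union> ?L2)"
    using f by (simp add: B_automorphism_def B_vertices_eq_layers)
  have in_layer: "u \<in> layer n (card u)" "card u = k \<or> card u = Suc k" if "u \<in> ?V" for u
    using that unfolding B_vertices_def layer_def by simp_all
  have fV: "f v \<in> ?V" if "v \<in> ?V" for v
    using bij_betw_apply[OF bij] that by (simp add: B_vertices_eq_layers)
  define preserving where "preserving v \<longleftrightarrow> card (f v) = card v" for v
  have const: "preserving v = preserving w" if "v \<in> ?V" "w \<in> ?V" for v w
    using B_invariant_constant[of n k preserving, OF _ that]
      B_automorphism_card_preserving_invariant[OF f] unfolding preserving_def by blast
  have card_L: "\<And>v. v \<in> ?L1 \<Longrightarrow> card v = k" "\<And>v. v \<in> ?L2 \<Longrightarrow> card v = Suc k"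
    unfolding layer_def by simp_all
  have L_V: "v \<in> ?V" if "v \<in> ?L1 \<or> v \<in> ?L2" for v
    using that by (simp add: B_vertices_eq_layers)
  show ?thesis
  proof (cases "\<forall>v \<in> ?V. preserving v")
    case True
    then have "f v \<in> layer n (card v)" if "v \<in> ?V" for v
      using in_layer(1)[OF fV[OF that]] that unfolding preserving_def by simp
    then have "f ` ?L1 \<subseteq> ?L1" "f ` ?L2 \<subseteq> ?L2"
      using L_V card_L by fastforce+
    then show ?thesis
      using bij_betw_disjoint_Un_image_eq[OF bij layers_disjoint] by blast
  next
    case False
    then have swapped: "card (f v) \<noteq> card v" if "v \<in> ?V" for v
      using const that unfolding preserving_def by blast
    have "f v \<in> layer n (if card v = k then Suc k else k)" if "v \<in> ?V" for v
      using in_layer[OF fV[OF that]] in_layer(2)[OF that] swapped[OF that] by auto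
    then have "f ` ?L1 \<subseteq> ?L2" "f ` ?L2 \<subseteq> ?L1"
      using L_V card_L by fastforce+
    moreover have "bij_betw f (?L1 \<union> ?L2) (?L2 \<union> ?L1)"
      using bij by (simp only: Un_commute[of ?L2 ?L1])
    moreover have "?L2 \<inter> ?L1 = {}"
      using layers_disjoint by blast
    ultimately show ?thesis
      using bij_betw_disjoint_Un_image_eq[of f ?L1 ?L2 ?L2 ?L1] by blast
  qed
qed

theorem corollary3p9:
  fixes n k :: nat and f :: "nat set \<Rightarrow> nat set"
  assumes "n \<ge> 4" and "1 \<le> k" and "2 * k < n"
    and "B_automorphism n k f"
  shows "(n \<noteq> 2 * k + 1 \<longrightarrow> f ` layer n k = layer n k \<and> f ` layer n (k + 1) = layer n (k + 1)) \<and>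
         (n = 2 * k + 1 \<longrightarrow>
            (f ` layer n k = layer n k \<and> f ` layer n (k + 1) = layer n (k + 1)) \<or>
            (f ` layer n k = layer n (k + 1) \<and> f ` layer n (k + 1) = layer n k))"
proof -
  have swap_forces_odd: "n = 2 * k + 1" if swap: "f ` layer n k = layer n (Suc k)"
  proof (rule ccontr)
    assume "n \<noteq> 2 * k + 1"
    with \<open>2 * k < n\<close> have "n choose k < n choose Suc k"
      by (intro binomial_less_binomial_Suc) linarith
    moreover have "bij_betw f (layer n k \<union> layer n (Suc k)) (layer n k \<union> layer n (Suc k))"
      using \<open>B_automorphism n k f\<close> by (simp add: B_automorphism_def B_vertices_eq_layers)
    then have "inj_on f (layer n k)"
      using bij_betw_imp_inj_on inj_on_subset by blast
    then have "card (layer n (Suc k)) = card (layer n k)"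
      using swap card_image by metis
    ultimately show False by (simp add: card_layer)
  qed
  then show ?thesis
    using B_automorphism_preserves_or_swaps_layers[OF \<open>B_automorphism n k f\<close>]
    unfolding Suc_eq_plus1 by blast
qed

end
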